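(* Let $a_1,\dots,a_n$ be positive integers with $\sum_i a_i<2^{4n}$, and let $b\in(0,1)$ be a constant. Let $V$ be any subset of $\{v\in\mathbb N:\exists S\subseteq[n],\ \Sigma(S)=v\}$ with $|V|\ge 2^{(1-\ell)n}$ for some $\ell\in[0,1]$. Let $p$ be a uniformly random prime in $[2^{bn},2^{bn+1}]$, $k$ a uniformly random integer in $\{0,\dots,p-1\}$, and $v_{p,k}=|\{v\in V: v\equiv k\pmod p\}|$. Then, for $n$ large enough, $\Pr_{p,k}[v_{p,k}\ge 2^{(1-\ell-b)n-2}]=\Omega(1/n)$ if $\ell\le 1-b$, and $\Pr_{p,k}[v_{p,k}\ge1]=\Omega(\min(1/n,2^{(1-\ell-b)n}))$ if $\ell>1-b$. *)

theory Defs
  imports "HOL-Probability.Probability_Mass_Function" "HOL-Computational_Algebra.Primes"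
begin

definition subset_sums :: "(nat \<Rightarrow> nat) \<Rightarrow> nat \<Rightarrow> nat set" where
  "subset_sums a n = {v. \<exists>S. S \<subseteq> {1..n} \<and> (\<Sum>i\<in>S. a i) = v}"

definition primes_in :: "real \<Rightarrow> nat \<Rightarrow> nat set" where
  "primes_in b n = {p::nat. prime p \<and> 2 powr (b * real n) \<le> real p \<and> real p \<le> 2 powr (b * real n + 1)}"

definition residue_count :: "nat set \<Rightarrow> nat \<Rightarrow> nat \<Rightarrow> nat" where
  "residue_count V p k = card {v \<in> V. v mod p = k mod p}"

definition pk_pmf :: "real \<Rightarrow> nat \<Rightarrow> (nat \<times> nat) pmf" where
  "pk_pmf b n = bind_pmf (pmf_of_set (primes_in b n))
      (\<lambda>p. map_pmf (\<lambda>k. (p, k)) (pmf_of_set {0..<p}))"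

end

theory Submission
  imports Defs "HOL-Real_Asymp.Real_Asymp"
begin

text \<open>
  Erd\H{o}s' proof of Bertrand's postulate, which bounds the prime factorisation of
  $\binom{2m}{m} \geq 4^m/2m$ from above, shows that $[2^{bn}, 2^{bn+1}]$ contains at least
  $2^{bn}/12n$ primes. Since every element of $V$ is below $2^{4n}$, two distinct elements of $V$
  are congruent modulo at most $4/b$ of these primes, so on average over $p$ the number
  $\sum_k v_{p,k}^2$ of colliding pairs is $O(|V| + n |V|^2 / 2^{bn})$, and by Markov's inequality
  this holds for at least half of the primes. For such a prime, Cauchy--Schwarz forces a set of
  residue classes carrying mass $M$ to contain at least $M^2 / \sum_k v_{p,k}^2$ classes. Applied to
  the nonempty classes ($M = |V|$), and to the classes of size at least $2^{(1-\ell-b)n-2}$, which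
  carry at least half of $V$ when $\ell \leq 1 - b$, this gives both bounds.
\<close>

definition primorial :: "nat \<Rightarrow> nat" where
  "primorial x = \<Prod>{p. prime p \<and> p \<le> x}"

lemma finite_primes_le [simp]: "finite {p::nat. prime p \<and> p \<le> x}"
  by (rule finite_subset[of _ "{..x}"]) auto

lemma prod_primes_dvd:
  fixes n :: nat
  assumes "finite Q" "\<And>p. p \<in> Q \<Longrightarrow> prime p" "\<And>p. p \<in> Q \<Longrightarrow> p dvd n"
  shows "\<Prod>Q dvd n"
  using assms
proof (induction Q rule: finite_induct)
  case (insert q Q)
  have "coprime q (\<Prod>Q)"
    using insert by (intro prod_coprime_right) (metis insertCI primes_coprime)
  then show ?case
    using insert by (simp add: divides_mult)
qed simp

lemma binomial_odd_middle_le: "(2*k+1) choose k \<le> 4^k"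
proof -
  have "2 * ((2*k+1) choose k) = ((2*k+1) choose k) + ((2*k+1) choose (k+1))"
    using binomial_symmetric[of k "2*k+1"] by simp
  also have "\<dots> = (\<Sum>i\<in>{k,k+1}. (2*k+1) choose i)" by simp
  also have "\<dots> \<le> (\<Sum>i\<le>2*k+1. (2*k+1) choose i)"
    by (rule sum_mono2) auto
  also have "\<dots> = 2^(2*k+1)" by (rule choose_row_sum)
  also have "\<dots> = 2 * 4^k" by (simp add: power_mult)
  finally show ?thesis by simp
qed

lemma prod_primes_between_dvd_binomial:
  "\<Prod>{p. prime p \<and> k+1 < p \<and> p \<le> 2*k+1} dvd (2*k+1) choose k"
proof (rule prod_primes_dvd)
  show "finite {p. prime p \<and> k+1 < p \<and> p \<le> 2*k+1}"
    by (rule finite_subset[of _ "{..2*k+1}"]) auto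
  fix p assume p: "p \<in> {p. prime p \<and> k+1 < p \<and> p \<le> 2*k+1}"
  then show pr: "prime p" by simp
  have "p dvd fact (2*k+1)"
    using p pr by (intro prime_dvd_fact_iff[THEN iffD2]) auto
  also have "fact (2*k+1) = fact k * fact (k+1) * ((2*k+1) choose k)"
    using binomial_fact_lemma[of k "2*k+1"] by (simp add: mult.commute)
  finally have "p dvd fact k * fact (k+1) * ((2*k+1) choose k)" .
  moreover have "\<not> p dvd fact k" "\<not> p dvd fact (k+1)"
    using p by (simp_all only: prime_dvd_fact_iff[OF pr]) auto
  ultimately show "p dvd (2*k+1) choose k"
    using pr by (auto simp: prime_dvd_mult_iff)
qed

lemma primorial_odd_le: "primorial (2*k+1) \<le> primorial (k+1) * 4^k"
proof -
  define B where "B = {p::nat. prime p \<and> k+1 < p \<and> p \<le> 2*k+1}"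
  have "{p. prime p \<and> p \<le> 2*k+1} = {p. prime p \<and> p \<le> k+1} \<union> B"
    "{p. prime p \<and> p \<le> k+1} \<inter> B = {}"
    by (auto simp: B_def)
  moreover have "finite B" by (rule finite_subset[of _ "{..2*k+1}"]) (auto simp: B_def)
  ultimately have "primorial (2*k+1) = primorial (k+1) * \<Prod>B"
    by (simp add: primorial_def prod.union_disjoint)
  moreover have "\<Prod>B \<le> (2*k+1) choose k"
    unfolding B_def by (rule dvd_imp_le[OF prod_primes_between_dvd_binomial]) simp
  ultimately show ?thesis
    using binomial_odd_middle_le[of k] by simp
qed

lemma primorial_le_four_power: "primorial x \<le> 4 ^ x"
proof (induction x rule: less_induct)
  case (less x)
  show ?case
  proof (cases "x \<le> 2")
    case True
    then consider "x \<le> 1" | "x = 2" by linarith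
    then show ?thesis
    proof cases
      case 1
      then have e: "{p::nat. prime p \<and> p \<le> x} = {}" by (auto dest: prime_gt_1_nat)
      show ?thesis unfolding primorial_def e by simp
    next
      case 2
      then have e: "{p::nat. prime p \<and> p \<le> x} = {2}"
        using prime_ge_2_nat by (auto intro: antisym)
      show ?thesis unfolding primorial_def e using 2 by simp
    qed
  next
    case False
    show ?thesis
    proof (cases "even x")
      case True
      then have "\<not> prime x" using False prime_odd_nat by fastforce
      then have "{p. prime p \<and> p \<le> x} = {p. prime p \<and> p \<le> x - 1}"
        using le_eq_less_or_eq by auto
      then have "primorial x = primorial (x - 1)" by (simp add: primorial_def)
      also have "\<dots> \<le> 4 ^ (x - 1)" using less False by simp
      also have "\<dots> \<le> 4 ^ x" by (rule power_increasing) auto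
      finally show ?thesis .
    next
      case odd: False
      then obtain k where x: "x = 2*k+1" by (metis oddE)
      have "primorial x \<le> primorial (k+1) * 4^k"
        unfolding x by (rule primorial_odd_le)
      also have "\<dots> \<le> 4^(k+1) * 4^k"
        using less.IH[of "k+1"] False x by simp
      also have "\<dots> = 4^x" by (simp add: x power_add[symmetric])
      finally show ?thesis .
    qed
  qed
qed

lemma multiplicity_lt_self:
  fixes p x :: nat
  assumes "prime p" "x > 0"
  shows "multiplicity p x < x"
proof -
  have "p ^ multiplicity p x \<le> x"
    using assms by (intro dvd_imp_le multiplicity_dvd) auto
  moreover have "multiplicity p x < 2 ^ multiplicity p x" by (rule less_exp)
  moreover have "2 ^ multiplicity p x \<le> p ^ multiplicity p x"
    using prime_ge_2_nat[OF assms(1)] by (intro power_mono) auto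
  ultimately show ?thesis by linarith
qed

lemma legendre_formula:
  fixes p :: nat
  assumes "prime p" "n \<le> N"
  shows "multiplicity p (fact n) = (\<Sum>j\<in>{1..N}. n div p ^ j)"
  using assms(2)
proof (induction n)
  case (Suc n)
  have dvd_iff: "p ^ j dvd Suc n \<longleftrightarrow> j \<le> multiplicity p (Suc n)" for j
    using assms(1) by (intro power_dvd_iff_le_multiplicity) auto
  have "multiplicity p (Suc n) \<le> N"
    using multiplicity_lt_self[OF assms(1), of "Suc n"] Suc.prems by simp
  then have dvd_set: "{j\<in>{1..N}. p ^ j dvd Suc n} = {1..multiplicity p (Suc n)}"
    unfolding dvd_iff by auto
  have "multiplicity p (fact (Suc n) :: nat) = multiplicity p (Suc n * fact n)"
    by (simp add: fact_Suc)
  also have "\<dots> = multiplicity p (Suc n) + multiplicity p (fact n :: nat)"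
    by (rule prime_elem_multiplicity_mult_distrib) (use assms(1) in auto)
  also have "multiplicity p (Suc n) = (\<Sum>j\<in>{1..N}. if p ^ j dvd Suc n then 1 else 0)"
    using dvd_set by (simp add: sum.If_cases Int_def conj_commute)
  also have "multiplicity p (fact n :: nat) = (\<Sum>j\<in>{1..N}. n div p ^ j)"
    using Suc by simp
  also have "(\<Sum>j\<in>{1..N}. if p ^ j dvd Suc n then 1 else 0) + (\<Sum>j\<in>{1..N}. n div p ^ j)
      = (\<Sum>j\<in>{1..N}. Suc n div p ^ j)"
    unfolding sum.distrib[symmetric] by (intro sum.cong refl) (simp add: div_Suc[of n] dvd_eq_mod_eq_0)
  finally show ?case .
qed simp

lemma double_div_le: "2*m div q \<le> 2*(m div q) + (1::nat)"
proof (cases "q = 0")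
  case False
  have split: "2*m = 2*(m mod q) + 2*(m div q)*q"
    using mod_div_mult_eq[of m q] by linarith
  have "2*m div q = 2*(m mod q) div q + 2*(m div q)"
    using False by (subst split) simp
  moreover have "2*(m mod q) div q < 2"
    using False by (simp add: div_less_iff_less_mult)
  ultimately show ?thesis by simp
qed simp

lemma multiplicity_central_binomial:
  fixes p m :: nat
  assumes "prime p"
  shows "multiplicity p ((2*m) choose m) = (\<Sum>j\<in>{1..2*m}. 2*m div p^j - 2*(m div p^j))"
proof -
  have "fact (2*m) = fact m * fact m * ((2*m) choose m)"
    using binomial_fact_lemma[of m "2*m"] by (simp add: mult_2)
  then have "multiplicity p (fact (2*m) :: nat)
      = 2 * multiplicity p (fact m :: nat) + multiplicity p ((2*m) choose m)"
    using assms by (simp add: prime_elem_multiplicity_mult_distrib)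
  moreover have "2*(m div q) \<le> 2*m div q" for q :: nat
    by (cases "q = 0") (simp_all add: less_eq_div_iff_mult_less_eq div_times_less_eq_dividend)
  then have "(\<Sum>j\<in>{1..2*m}. 2*m div p^j - 2*(m div p^j))
      = (\<Sum>j\<in>{1..2*m}. 2*m div p^j) - 2 * (\<Sum>j\<in>{1..2*m}. m div p^j)"
    by (simp add: sum_subtractf_nat sum_distrib_left)
  ultimately show ?thesis
    using legendre_formula[OF assms, of "2*m" "2*m"] legendre_formula[OF assms, of m "2*m"]
    by simp
qed

lemma prime_power_multiplicity_central_binomial_le:
  fixes p m :: nat
  assumes "prime p" "1 \<le> m"
  shows "p ^ multiplicity p ((2*m) choose m) \<le> 2*m"
proof (rule ccontr)
  define t where "t = multiplicity p ((2*m) choose m)"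
  assume "\<not> p ^ multiplicity p ((2*m) choose m) \<le> 2*m"
  then have big: "2*m < p ^ t" by (simp add: t_def)
  then have "t \<noteq> 0" using assms(2) by (intro notI) simp
  have "t = (\<Sum>j\<in>{1..2*m}. 2*m div p^j - 2*(m div p^j))"
    unfolding t_def by (rule multiplicity_central_binomial[OF assms(1)])
  also have "\<dots> \<le> (\<Sum>j\<in>{1..2*m}. if j < t then 1 else 0)"
  proof (rule sum_mono)
    fix j
    show "2*m div p^j - 2*(m div p^j) \<le> (if j < t then 1 else 0)"
    proof (cases "j < t")
      case False
      then have "p^t \<le> p^j"
        using prime_gt_1_nat[OF assms(1)] by (intro power_increasing) auto
      then have "2*m < p^j" using big by linarith
      then show ?thesis using False by simp
    qed (use double_div_le[of m "p^j"] in simp)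
  qed
  also have "\<dots> = card ({1..2*m} \<inter> {j. j < t})"
    by (simp add: sum.If_cases)
  also have "\<dots> \<le> card {1..<t}" by (rule card_mono) auto
  also have "\<dots> = t - 1" by simp
  finally show False
    using \<open>t \<noteq> 0\<close> by linarith
qed

text \<open>Such a prime occurs exactly twice in $(2m)!$ and once in each factor $m!$.\<close>
lemma multiplicity_central_binomial_eq_0:
  fixes p m :: nat
  assumes "prime p" "3 \<le> m" "2*m < 3*p" "p \<le> m"
  shows "multiplicity p ((2*m) choose m) = 0"
proof -
  have vanish: "2*m div p^j - 2*(m div p^j) = 0" if "j \<in> {1..2*m}" for j
  proof (cases "j = 1")
    case True
    have "2*m div p = 2" "m div p = 1" using assms by (auto intro: div_nat_eqI)
    then show ?thesis using True by simp
  next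
    case False
    have "2*m < 3*p" by (rule assms(3))
    also have "3*p \<le> p^2"
      using assms by (simp add: power2_eq_square)
    also have "p^2 \<le> p^j"
      using that False prime_gt_1_nat[OF assms(1)] by (intro power_increasing) auto
    finally show ?thesis by simp
  qed
  show ?thesis
    unfolding multiplicity_central_binomial[OF assms(1)] by (rule sum.neutral) (use vanish in blast)
qed

lemma central_binomial_le_simple_prime_factors:
  fixes m :: nat
  assumes "1 \<le> m"
  defines "C \<equiv> (2*m) choose m"
  shows "C \<le> (2*m) ^ (nat \<lfloor>sqrt (2*m)\<rfloor> + 1) * \<Prod>{p \<in> prime_factors C. multiplicity p C = 1}"
proof -
  define \<mu> where "\<mu> = (\<lambda>p. multiplicity p C)"
  define s where "s = nat \<lfloor>sqrt (2*m)\<rfloor>"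
  define F where "F = {p \<in> prime_factors C. 2 \<le> \<mu> p}"
  define S where "S = {p \<in> prime_factors C. \<mu> p = 1}"
  have "C > 0" by (simp add: C_def)
  have prime_factor: "prime p" "1 \<le> \<mu> p" if "p \<in> prime_factors C" for p
    using that \<open>C > 0\<close> by (auto simp: \<mu>_def prime_factors_multiplicity)
  have power_le: "p ^ \<mu> p \<le> 2*m" if "p \<in> prime_factors C" for p
    using prime_power_multiplicity_central_binomial_le[of p m] prime_factor[OF that] assms(1)
    by (simp add: \<mu>_def C_def)
  have "prime_factors C = F \<union> S"
  proof (intro equalityI subsetI)
    fix p assume "p \<in> prime_factors C"
    then show "p \<in> F \<union> S" using prime_factor(2)[of p] by (auto simp: F_def S_def)
  qed (auto simp: F_def S_def)
  moreover have "F \<inter> S = {}" "finite F" "finite S"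
    by (auto simp: F_def S_def)
  ultimately have "C = (\<Prod>p\<in>F. p ^ \<mu> p) * (\<Prod>p\<in>S. p ^ \<mu> p)"
    using prime_factorization_nat[OF \<open>C > 0\<close>] by (simp add: \<mu>_def prod.union_disjoint)
  also have "(\<Prod>p\<in>S. p ^ \<mu> p) = \<Prod>S" by (simp add: S_def)
  also have "(\<Prod>p\<in>F. p ^ \<mu> p) \<le> (2*m) ^ (s + 1)"
  proof (rule prod_le_power)
    have "F \<subseteq> {..s}"
    proof
      fix p assume p: "p \<in> F"
      then have "p ^ 2 \<le> p ^ \<mu> p"
        using prime_factor[of p] prime_ge_1_nat[of p] by (intro power_increasing) (auto simp: F_def)
      also have "\<dots> \<le> 2*m" using power_le p by (auto simp: F_def)
      finally have "real p ^ 2 \<le> real (2*m)" by (simp add: of_nat_power[symmetric] del: of_nat_power)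
      then show "p \<in> {..s}" unfolding s_def by (simp add: real_le_rsqrt le_nat_floor)
    qed
    then have "card F \<le> card {..s}" by (intro card_mono) simp_all
    then show "card F \<le> s + 1" by simp
  qed (use power_le assms(1) in \<open>auto simp: F_def\<close>)
  finally show ?thesis by (simp add: S_def \<mu>_def s_def)
qed

lemma prod_simple_prime_factors_central_binomial_le:
  fixes m :: nat
  assumes "3 \<le> m"
  defines "C \<equiv> (2*m) choose m"
  shows "\<Prod>{p \<in> prime_factors C. multiplicity p C = 1}
           \<le> 4 ^ (2*m div 3) * (2*m) ^ card {p. prime p \<and> m < p \<and> p \<le> 2*m}"
proof -
  define S where "S = {p \<in> prime_factors C. multiplicity p C = 1}"
  define D where "D = {p. prime p \<and> m < p \<and> p \<le> 2*m}"
  have S_prime: "prime p" "multiplicity p C = 1" "p \<le> 2*m" if "p \<in> S" for p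
    using that prime_power_multiplicity_central_binomial_le[of p m] assms(1)
    by (auto simp: S_def C_def)
  have "finite S" by (simp add: S_def)
  then have "\<Prod>S = \<Prod>(S \<inter> {..m}) * \<Prod>(S - {..m})"
    by (rule prod.Int_Diff)
  also have "\<dots> \<le> 4 ^ (2*m div 3) * (2*m) ^ card D"
  proof (rule mult_mono)
    have "S \<inter> {..m} \<subseteq> {p. prime p \<and> p \<le> 2*m div 3}"
    proof
      fix p assume p: "p \<in> S \<inter> {..m}"
      then have "\<not> 2*m < 3*p"
        using multiplicity_central_binomial_eq_0[of p m] S_prime[of p] assms(1) by (auto simp: C_def)
      then show "p \<in> {p. prime p \<and> p \<le> 2*m div 3}" using S_prime[of p] p by auto
    qed
    then have "\<Prod>(S \<inter> {..m}) \<le> primorial (2*m div 3)"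
      unfolding primorial_def by (intro dvd_imp_le prod_dvd_prod_subset) (auto simp: prime_gt_0_nat)
    then show "\<Prod>(S \<inter> {..m}) \<le> 4 ^ (2*m div 3)"
      using primorial_le_four_power order_trans by blast
    have "S - {..m} \<subseteq> D" using S_prime by (auto simp: D_def)
    then have "card (S - {..m}) \<le> card D"
      by (intro card_mono) (auto simp: D_def intro: finite_subset[of _ "{..2*m}"])
    then show "\<Prod>(S - {..m}) \<le> (2*m) ^ card D"
      using S_prime assms(1) by (intro prod_le_power) auto
  qed auto
  finally show ?thesis by (simp add: S_def D_def)
qed

lemma central_binomial_le:
  fixes m :: nat
  assumes "3 \<le> m"
  shows "(2*m) choose m \<le> (2*m) ^ (nat \<lfloor>sqrt (2*m)\<rfloor> + 1) * 4 ^ (2*m div 3)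
           * (2*m) ^ card {p. prime p \<and> m < p \<and> p \<le> 2*m}"
proof -
  have "(2*m) choose m \<le> (2*m) ^ (nat \<lfloor>sqrt (2*m)\<rfloor> + 1)
      * \<Prod>{p \<in> prime_factors ((2*m) choose m). multiplicity p ((2*m) choose m) = 1}"
    using assms by (intro central_binomial_le_simple_prime_factors) simp
  also have "\<dots> \<le> (2*m) ^ (nat \<lfloor>sqrt (2*m)\<rfloor> + 1)
      * (4 ^ (2*m div 3) * (2*m) ^ card {p. prime p \<and> m < p \<and> p \<le> 2*m})"
    using assms by (intro mult_left_mono prod_simple_prime_factors_central_binomial_le) simp_all
  finally show ?thesis by (simp add: mult.assoc)
qed

lemma card_primes_between_log_bound:
  fixes m :: nat
  assumes "3 \<le> m"
  shows "2 * real m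
    \<le> (sqrt (2 * real m) + 2 + card {p. prime p \<and> m < p \<and> p \<le> 2*m}) * log 2 (2 * real m) + 4 * real m / 3"
proof -
  define D where "D = {p. prime p \<and> m < p \<and> p \<le> 2*m}"
  define s where "s = nat \<lfloor>sqrt (2*m)\<rfloor>"
  define M where "M = 2*m"
  define L where "L = log 2 M"
  have "0 < M" "0 < L" using assms by (simp_all add: M_def L_def)
  have "log 2 4 = (2::real)"
    using log_pow_cancel[of 2 2] by simp
  have "4^m / real M \<le> real ((2*m) choose m)"
    using assms central_binomial_lower_bound[of m] by (simp add: M_def)
  also have "\<dots> \<le> real (M ^ (s+1) * 4 ^ (2*m div 3) * M ^ card D)"
    unfolding s_def D_def M_def of_nat_le_iff by (rule central_binomial_le[OF assms])
  finally have "log 2 (4^m / real M) \<le> log 2 (real (M ^ (s+1) * 4 ^ (2*m div 3) * M ^ card D))"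
    using \<open>0 < M\<close> by (subst log_le_cancel_iff) auto
  also have "\<dots> = (s+1) * L + 2 * (2*m div 3) + card D * L"
    using \<open>0 < M\<close> \<open>log 2 4 = 2\<close> by (simp add: L_def log_mult log_nat_power algebra_simps)
  also have "log 2 (4^m / real M) = 2*m - L"
    using \<open>0 < M\<close> log_pow_cancel[of 2 "2*m"] by (simp add: L_def log_divide power_mult)
  finally have "2*m - L \<le> (s+1) * L + 2 * (2*m div 3) + card D * L" .
  moreover have "s * L \<le> sqrt (2*m) * L"
    using \<open>0 < L\<close> by (intro mult_right_mono) (auto simp: s_def)
  moreover have "real (2 * (2*m div 3)) \<le> 4*m/3" by linarith
  ultimately show ?thesis
    by (simp add: D_def L_def M_def algebra_simps)
qed

lemma card_primes_between_lower:
  "eventually (\<lambda>m. real m / (3 * log 2 (2*m)) \<le> card {p. prime p \<and> m < p \<and> p \<le> 2*m}) sequentially"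
proof -
  have "eventually (\<lambda>m::nat. (sqrt (2*m) + 2) * log 2 (2*m) \<le> m / 3) sequentially"
    by real_asymp
  moreover have "eventually (\<lambda>m::nat. 3 \<le> m) sequentially"
    by (rule eventually_ge_at_top)
  ultimately show ?thesis
  proof eventually_elim
    case (elim m)
    define L where "L = log 2 (2*m)"
    have "0 < L" using elim by (simp add: L_def)
    have "m / 3 \<le> card {p. prime p \<and> m < p \<and> p \<le> 2*m} * L"
      using card_primes_between_log_bound[OF elim(2)] elim(1)
      by (simp add: L_def algebra_simps)
    then show ?case using \<open>0 < L\<close> by (simp add: L_def field_simps)
  qed
qed

lemma finite_primes_in: "finite (primes_in b n)"
proof (rule finite_subset)
  show "primes_in b n \<subseteq> {..nat \<lceil>2 powr (b * n + 1)\<rceil>}"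
  proof
    fix p assume "p \<in> primes_in b n"
    then have "real p \<le> 2 powr (b * n + 1)" by (simp add: primes_in_def)
    also have "\<dots> \<le> of_int \<lceil>2 powr (b * n + 1)\<rceil>" by (rule le_of_int_ceiling)
    finally have "int p \<le> \<lceil>2 powr (b * n + 1)\<rceil>" by linarith
    then show "p \<in> {..nat \<lceil>2 powr (b * n + 1)\<rceil>}" by simp
  qed
qed simp

lemma primes_between_floor_subset_primes_in:
  "{p. prime p \<and> nat \<lfloor>2 powr (b*n)\<rfloor> < p \<and> p \<le> 2 * nat \<lfloor>2 powr (b*n)\<rfloor>} \<subseteq> primes_in b n"
proof
  define X where "X = 2 powr (b*n)"
  define m where "m = nat \<lfloor>X\<rfloor>"
  have m: "real m \<le> X" "X < real m + 1" by (simp_all add: m_def X_def)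
  fix p assume "p \<in> {p. prime p \<and> nat \<lfloor>2 powr (b*n)\<rfloor> < p \<and> p \<le> 2 * nat \<lfloor>2 powr (b*n)\<rfloor>}"
  then have p: "prime p" "real (m + 1) \<le> real p" "real p \<le> real (2 * m)"
    unfolding of_nat_le_iff by (auto simp: m_def X_def)
  then show "p \<in> primes_in b n"
    using m by (simp add: primes_in_def powr_add X_def)
qed

lemma card_primes_in_lower:
  fixes b :: real
  assumes "0 < b" "b \<le> 1"
  shows "eventually (\<lambda>n. 2 powr (b*n) / (12 * real n) \<le> card (primes_in b n)) sequentially"
proof -
  define m where "m = (\<lambda>n::nat. nat \<lfloor>2 powr (b*n)\<rfloor>)"
  have lim: "filterlim (\<lambda>n::nat. 2 powr (b*n)) at_top sequentially"
    using assms by real_asymp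
  then have "filterlim m sequentially sequentially"
    unfolding m_def by (intro filterlim_compose[OF filterlim_nat_sequentially]
        filterlim_compose[OF filterlim_floor_sequentially])
  then have "eventually (\<lambda>n. real (m n) / (3 * log 2 (2 * m n))
      \<le> card {p. prime p \<and> m n < p \<and> p \<le> 2 * m n}) sequentially"
    by (rule eventually_compose_filterlim[OF card_primes_between_lower])
  moreover have "eventually (\<lambda>n. 2 \<le> 2 powr (b*n)) sequentially"
    using lim by (simp add: filterlim_at_top)
  moreover have "eventually (\<lambda>n::nat. 1 \<le> n) sequentially"
    by (rule eventually_ge_at_top)
  ultimately show ?thesis
  proof eventually_elim
    case (elim n)
    define X where "X = 2 powr (b*n)"
    have mX: "real (m n) \<le> X" "X < real (m n) + 1" "2 \<le> X"
      using elim by (simp_all add: m_def X_def)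
    then have "1 \<le> real (m n)" by linarith
    have "log 2 (2 * m n) \<le> log 2 (2 * X)"
      using mX \<open>1 \<le> real (m n)\<close> by (subst log_le_cancel_iff) auto
    also have "\<dots> = b*n + 1" by (simp add: X_def log_mult)
    also have "\<dots> \<le> 2 * n"
      using assms elim mult_right_mono[of b 1 "real n"] by linarith
    finally have "(X/2) / (3 * (2*n)) \<le> real (m n) / (3 * log 2 (2 * m n))"
      using mX \<open>1 \<le> real (m n)\<close> by (intro frac_le) auto
    also have "\<dots> \<le> card {p. prime p \<and> m n < p \<and> p \<le> 2 * m n}"
      by (rule elim(1))
    also have "\<dots> \<le> card (primes_in b n)"
      unfolding m_def of_nat_le_iff by (rule card_mono[OF finite_primes_in primes_between_floor_subset_primes_in])
    finally show ?case by (simp add: X_def)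
  qed
qed

text \<open>The product of these primes, each at least $2^{bn}$, divides $|x - y| < 2^{4n}$.\<close>
lemma card_primes_in_cong_le:
  fixes b :: real and x y n :: nat
  assumes "0 < b" "1 \<le> n" "x \<noteq> y" "x < 2^(4*n)" "y < 2^(4*n)"
  shows "real (card {p \<in> primes_in b n. x mod p = y mod p}) \<le> 4 / b"
proof -
  define Q where "Q = {p \<in> primes_in b n. x mod p = y mod p}"
  define d where "d = (if x \<le> y then y - x else x - y)"
  define X where "X = 2 powr (b * n)"
  have d: "0 < d" "d < 2^(4*n)" using assms by (auto simp: d_def)
  have "finite Q" using finite_primes_in by (simp add: Q_def)
  have "\<forall>p\<in>Q. prime p \<and> p dvd d"
    by (auto simp: Q_def d_def primes_in_def mod_eq_dvd_iff_nat intro: mod_eq_dvd_iff_nat[THEN iffD1])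
  then have "\<Prod>Q dvd d"
    using prod_primes_dvd[OF \<open>finite Q\<close>] by blast
  then have "\<Prod>Q \<le> d" using d by (intro dvd_imp_le) auto
  have "X ^ card Q = (\<Prod>p\<in>Q. X)" by simp
  also have "\<dots> \<le> (\<Prod>p\<in>Q. real p)"
    by (rule prod_mono) (auto simp: Q_def primes_in_def X_def)
  also have "\<dots> \<le> real d"
    using \<open>\<Prod>Q \<le> d\<close> by (simp only: of_nat_prod[symmetric] of_nat_le_iff)
  also have "\<dots> < 2 ^ (4*n)"
    using d(2) by (simp only: of_nat_less_numeral_power_cancel_iff)
  finally have "2 powr (b * n * card Q) < 2 powr (4 * n)"
    by (simp add: X_def powr_realpow[symmetric] powr_powr)
  then have "b * card Q * n < 4 * n" by (simp add: mult_ac)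
  then have "b * card Q < 4" using assms(2) by simp
  then show ?thesis using assms(1) by (simp add: Q_def field_simps)
qed

lemma measure_bind_pmf:
  "measure_pmf.prob (bind_pmf M f) E = (\<integral>x. measure_pmf.prob (f x) E \<partial>M)"
  unfolding measure_pmf_bind
  by (rule measure_pmf.measure_bind[where N="count_space UNIV"])
     (auto simp: space_subprob_algebra prob_space_imp_subprob_space measure_pmf.prob_space_axioms)

lemma prob_uniform_residue:
  fixes P :: "nat set"
  assumes "finite P" "P \<noteq> {}" "0 \<notin> P"
  shows "measure_pmf.prob (pmf_of_set P \<bind> (\<lambda>p. map_pmf (Pair p) (pmf_of_set {0..<p}))) E
       = (\<Sum>p\<in>P. card {k\<in>{0..<p}. (p, k) \<in> E} / p) / card P"
proof -
  have "{0..<p} \<noteq> {}" if "p \<in> P" for p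
    using that assms(3) by (cases p) auto
  then have "measure_pmf.prob (map_pmf (Pair p) (pmf_of_set {0..<p})) E
      = card {k\<in>{0..<p}. (p, k) \<in> E} / p" if "p \<in> P" for p
    using that by (simp add: measure_pmf_of_set Int_def vimage_def)
  then show ?thesis
    using assms by (simp add: measure_bind_pmf integral_pmf_of_set)
qed

lemma residue_count_eq_sum:
  assumes "finite V" "k < p"
  shows "real (residue_count V p k) = (\<Sum>v\<in>V. if v mod p = k then 1 else 0)"
  using assms by (simp add: residue_count_def sum.If_cases Int_def conj_commute)

lemma sum_residue_count:
  assumes "finite V" "0 < p"
  shows "(\<Sum>k\<in>{0..<p}. real (residue_count V p k)) = card V"
proof -
  have "(\<Sum>k\<in>{0..<p}. real (residue_count V p k))
      = (\<Sum>k\<in>{0..<p}. \<Sum>v\<in>V. if v mod p = k then 1 else 0)"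
    using assms(1) by (intro sum.cong) (simp_all add: residue_count_eq_sum)
  also have "\<dots> = (\<Sum>v\<in>V. \<Sum>k\<in>{0..<p}. if v mod p = k then 1 else 0)"
    by (rule sum.swap)
  also have "\<dots> = card V"
    using assms(2) by simp
  finally show ?thesis .
qed

lemma sum_residue_count_squared:
  assumes "finite V" "0 < p"
  shows "(\<Sum>k\<in>{0..<p}. real (residue_count V p k) ^ 2)
       = (\<Sum>x\<in>V. \<Sum>y\<in>V. if x mod p = y mod p then 1 else 0)"
proof -
  have "(\<Sum>k\<in>{0..<p}. real (residue_count V p k) ^ 2)
      = (\<Sum>k\<in>{0..<p}. \<Sum>x\<in>V. \<Sum>y\<in>V.
           (if x mod p = k then 1 else 0) * (if y mod p = k then 1 else 0))"
    using assms(1)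
    by (intro sum.cong) (simp_all add: residue_count_eq_sum power2_eq_square sum_product)
  also have "\<dots> = (\<Sum>x\<in>V. \<Sum>y\<in>V. \<Sum>k\<in>{0..<p}.
           (if x mod p = k then 1 else 0) * (if y mod p = k then 1 else 0))"
    by (simp add: sum.swap[of _ "{0..<p}"])
  also have "\<dots> = (\<Sum>x\<in>V. \<Sum>y\<in>V. \<Sum>k\<in>{0..<p}.
           if x mod p = k then (if x mod p = y mod p then 1 else 0) else 0)"
    by (intro sum.cong) auto
  also have "\<dots> = (\<Sum>x\<in>V. \<Sum>y\<in>V. if x mod p = y mod p then 1 else 0)"
    using assms(2) by simp
  finally show ?thesis .
qed

lemma sum_heavy_residue_count_ge:
  fixes T :: real
  assumes "finite V" "0 < p" "0 \<le> T"
  shows "card V - p * T \<le> (\<Sum>k\<in>{k\<in>{0..<p}. T \<le> residue_count V p k}. real (residue_count V p k))"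
proof -
  define w where "w = (\<lambda>k. real (residue_count V p k))"
  have "(\<Sum>k\<in>{k\<in>{0..<p}. \<not> T \<le> w k}. w k) \<le> (\<Sum>k\<in>{k\<in>{0..<p}. \<not> T \<le> w k}. T)"
    by (rule sum_mono) simp
  also have "\<dots> = card {k\<in>{0..<p}. \<not> T \<le> w k} * T" by simp
  also have "\<dots> \<le> p * T"
  proof (rule mult_right_mono)
    have "card {k\<in>{0..<p}. \<not> T \<le> w k} \<le> card {0..<p}" by (rule card_mono) auto
    then show "real (card {k\<in>{0..<p}. \<not> T \<le> w k}) \<le> real p" by simp
  qed (rule assms(3))
  finally have "(\<Sum>k\<in>{k\<in>{0..<p}. \<not> T \<le> w k}. w k) \<le> p * T" .
  moreover have "{0..<p} \<inter> {k. T \<le> w k} = {k\<in>{0..<p}. T \<le> w k}"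
    "{0..<p} - {k. T \<le> w k} = {k\<in>{0..<p}. \<not> T \<le> w k}"
    by blast+
  then have "(\<Sum>k\<in>{0..<p}. w k) = (\<Sum>k\<in>{k\<in>{0..<p}. T \<le> w k}. w k) + (\<Sum>k\<in>{k\<in>{0..<p}. \<not> T \<le> w k}. w k)"
    using sum.Int_Diff[of "{0..<p}" w "{k. T \<le> w k}"] by (simp only: finite_atLeastLessThan)
  moreover have "(\<Sum>k\<in>{0..<p}. w k) = card V"
    unfolding w_def by (rule sum_residue_count[OF assms(1,2)])
  ultimately show ?thesis unfolding w_def by linarith
qed

lemma sum_nonzero_residue_count:
  assumes "finite V" "0 < p"
  shows "(\<Sum>k\<in>{k\<in>{0..<p}. 1 \<le> residue_count V p k}. real (residue_count V p k)) = card V"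
  unfolding sum_residue_count[OF assms, symmetric]
proof (rule sum.mono_neutral_left)
  show "\<forall>k\<in>{0..<p} - {k\<in>{0..<p}. 1 \<le> residue_count V p k}. real (residue_count V p k) = 0"
  proof
    fix k assume "k \<in> {0..<p} - {k\<in>{0..<p}. 1 \<le> residue_count V p k}"
    then have "residue_count V p k = 0"
      by (simp only: Diff_iff mem_Collect_eq atLeastLessThan_iff) linarith
    then show "real (residue_count V p k) = 0" by simp
  qed
qed auto

lemma Markov_inequality_card:
  fixes f :: "'a \<Rightarrow> real" and A :: real
  assumes "finite P" "\<And>p. p \<in> P \<Longrightarrow> 0 \<le> f p" "sum f P \<le> card P * A" "0 < A"
  shows "card P \<le> 2 * card {p \<in> P. f p \<le> 2 * A}"
proof -
  define G where "G = {p \<in> P. f p \<le> 2 * A}"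
  have "card (P - G) * (2 * A) = (\<Sum>p\<in>P - G. 2 * A)" by simp
  also have "\<dots> \<le> (\<Sum>p\<in>P - G. f p)" by (rule sum_mono) (auto simp: G_def)
  also have "\<dots> \<le> sum f P" using assms(1,2) by (intro sum_mono2) auto
  finally have "A * (2 * card (P - G)) \<le> A * card P"
    using assms(3) by (simp add: mult_ac)
  then have "2 * card (P - G) \<le> card P"
    using assms(4) by (simp only: mult_le_cancel_left_pos)
  moreover have "card G \<le> card P" "card (P - G) = card P - card G"
    using assms(1) by (auto simp: G_def card_Diff_subset intro: card_mono)
  ultimately show ?thesis by (simp add: G_def)
qed

lemma sum_collisions_le:
  fixes P V :: "nat set" and K :: real
  assumes "finite P" "\<And>p. p \<in> P \<Longrightarrow> 0 < p" "finite V" "0 \<le> K"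
    and coll: "\<And>x y. x \<in> V \<Longrightarrow> y \<in> V \<Longrightarrow> x \<noteq> y \<Longrightarrow> card {p \<in> P. x mod p = y mod p} \<le> K"
  shows "(\<Sum>p\<in>P. \<Sum>k\<in>{0..<p}. real (residue_count V p k) ^ 2) \<le> card P * card V + K * real (card V) ^ 2"
proof -
  have "(\<Sum>p\<in>P. \<Sum>k\<in>{0..<p}. real (residue_count V p k) ^ 2)
      = (\<Sum>p\<in>P. \<Sum>x\<in>V. \<Sum>y\<in>V. if x mod p = y mod p then 1 else 0)"
    by (rule sum.cong[OF refl], rule sum_residue_count_squared) (use assms(2,3) in auto)
  also have "\<dots> = (\<Sum>x\<in>V. \<Sum>y\<in>V. \<Sum>p\<in>P. if x mod p = y mod p then 1 else 0)"
    by (simp add: sum.swap[of _ P])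
  also have "\<dots> = (\<Sum>x\<in>V. \<Sum>y\<in>V. real (card {p \<in> P. x mod p = y mod p}))"
    using assms(1) by (simp add: sum.If_cases Int_def conj_commute)
  also have "\<dots> \<le> (\<Sum>x\<in>V. \<Sum>y\<in>V. (if x = y then real (card P) else 0) + K)"
  proof (intro sum_mono)
    fix x y assume "x \<in> V" "y \<in> V"
    then show "real (card {p \<in> P. x mod p = y mod p}) \<le> (if x = y then real (card P) else 0) + K"
      using coll[of x y] assms(1,4) card_mono[of P "{p \<in> P. x mod p = y mod p}"] by auto
  qed
  also have "\<dots> = card P * card V + K * real (card V) ^ 2"
    using assms(3) by (simp add: sum.distrib power2_eq_square algebra_simps)
  finally show ?thesis .
qed

lemma power2_le_card_mult_sum_squares:
  fixes w :: "'a \<Rightarrow> real"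
  assumes "finite K" "H \<subseteq> K" "0 \<le> M" "M \<le> sum w H"
  shows "M^2 \<le> card H * (\<Sum>k\<in>K. w k ^ 2)"
proof -
  have "M^2 \<le> (sum w H)^2" using assms(3,4) by (intro power_mono) auto
  also have "\<dots> \<le> (\<Sum>k\<in>H. w k ^ 2) * card H" by (rule sum_squared_le_sum_of_squares)
  also have "\<dots> \<le> (\<Sum>k\<in>K. w k ^ 2) * card H"
    using assms(1,2) by (intro mult_right_mono sum_mono2) auto
  finally show ?thesis by (simp add: mult.commute)
qed

lemma second_moment_bound:
  fixes P V :: "nat set" and X K M :: real and H :: "nat \<Rightarrow> nat set"
  assumes P: "finite P" "P \<noteq> {}" "\<And>p. p \<in> P \<Longrightarrow> 0 < p \<and> p \<le> 2 * X"
    and V: "finite V" "V \<noteq> {}"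
    and coll: "0 \<le> K" "\<And>x y. x \<in> V \<Longrightarrow> y \<in> V \<Longrightarrow> x \<noteq> y \<Longrightarrow> card {p \<in> P. x mod p = y mod p} \<le> K"
    and H: "\<And>p. p \<in> P \<Longrightarrow> H p \<subseteq> {0..<p}"
      "\<And>p. p \<in> P \<Longrightarrow> M \<le> (\<Sum>k\<in>H p. real (residue_count V p k))" "0 \<le> M"
  shows "M^2 / (8 * X * (card V + K * real (card V) ^ 2 / card P)) \<le> (\<Sum>p\<in>P. card (H p) / p) / card P"
proof -
  define A where "A = card V + K * real (card V) ^ 2 / card P"
  define C where "C = (\<lambda>p. \<Sum>k\<in>{0..<p}. real (residue_count V p k) ^ 2)"
  define G where "G = {p \<in> P. C p \<le> 2 * A}"
  have "0 < card P" "0 < card V" using P V by (auto simp: card_gt_0_iff)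
  then have "0 < A" using coll(1) by (simp add: A_def add_pos_nonneg)
  obtain p0 where "p0 \<in> P" using P(2) by blast
  then have "0 < X" using P(3)[of p0] by linarith
  have "sum C P \<le> card P * A"
    using sum_collisions_le[OF P(1) _ V(1) coll] P(3) \<open>0 < card P\<close>
    by (force simp: C_def A_def algebra_simps)
  then have "card P \<le> 2 * card G"
    unfolding G_def using P(1) \<open>0 < A\<close> by (intro Markov_inequality_card) (auto simp: C_def intro: sum_nonneg)
  have good: "M^2 / (4 * A * X) \<le> card (H p) / p" if "p \<in> G" for p
  proof -
    have p: "p \<in> P" "C p \<le> 2 * A" using that by (auto simp: G_def)
    have "M^2 \<le> card (H p) * C p"
      unfolding C_def using H(1,2)[OF p(1)] H(3) by (intro power2_le_card_mult_sum_squares) auto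
    also have "\<dots> \<le> card (H p) * (2 * A)"
      using p(2) by (intro mult_left_mono) auto
    finally have "M^2 \<le> 2 * A * card (H p)" by (simp add: mult_ac)
    then have "M^2 / (4 * A * X) \<le> 2 * A * card (H p) / (4 * A * X)"
      using \<open>0 < A\<close> \<open>0 < X\<close> by (intro divide_right_mono) auto
    also have "\<dots> = card (H p) / (2 * X)" using \<open>0 < A\<close> by simp
    also have "\<dots> \<le> card (H p) / p"
      using P(3)[OF p(1)] by (intro divide_left_mono) auto
    finally show ?thesis .
  qed
  have "card P / 2 * (M^2 / (4 * A * X)) \<le> card G * (M^2 / (4 * A * X))"
    using \<open>card P \<le> 2 * card G\<close> \<open>0 < A\<close> \<open>0 < X\<close> by (intro mult_right_mono) auto
  also have "\<dots> \<le> (\<Sum>p\<in>G. card (H p) / p)"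
    using sum_mono[OF good] by simp
  also have "\<dots> \<le> (\<Sum>p\<in>P. card (H p) / p)"
    using P(1) by (intro sum_mono2) (auto simp: G_def)
  finally have "card P / 2 * (M^2 / (4 * A * X)) \<le> (\<Sum>p\<in>P. card (H p) / p)" .
  then show ?thesis
    using \<open>0 < card P\<close> by (simp add: A_def field_simps)
qed

lemma second_moment_bound_arith:
  fixes X v m n b :: real
  assumes "0 < X" "0 < v" "X / (12 * n) \<le> m" "1 \<le> n" "0 < b" "b \<le> 1"
  shows "b / 768 * min (1 / n) (v / X) \<le> v^2 / (8 * X * (v + 4 / b * v^2 / m))"
proof -
  have "0 < X / (12 * n)" using assms by simp
  then have "0 < m" using assms(3) by linarith
  have "4 / b * v^2 / m \<le> 48 * n * v^2 / (b * X)"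
    using assms \<open>0 < m\<close> by (simp add: field_simps)
  then have "8 * X * (4 / b * v^2 / m) \<le> 8 * X * (48 * n * v^2 / (b * X))"
    using assms by (intro mult_left_mono) auto
  also have "\<dots> = 384 * n * v^2 / b" using assms by simp
  finally have den: "8 * X * (v + 4 / b * v^2 / m) \<le> 8 * X * v + 384 * n * v^2 / b"
    by (simp add: distrib_left)
  define c where "c = b / 768 * min (1 / n) (v / X)"
  have "c * (8 * X * v) \<le> b / 768 * (v / X) * (8 * X * v)"
    unfolding c_def using assms by (intro mult_right_mono mult_left_mono) auto
  also have "\<dots> = b * v^2 / 96"
    using assms by (simp add: power2_eq_square)
  also have "\<dots> \<le> v^2 / 96"
    using assms by (intro divide_right_mono mult_left_le_one_le) auto
  finally have "c * (8 * X * v) \<le> v^2 / 96" .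
  moreover have "c * (384 * n * v^2 / b) \<le> b / 768 * (1 / n) * (384 * n * v^2 / b)"
    unfolding c_def using assms by (intro mult_right_mono mult_left_mono) auto
  then have "c * (384 * n * v^2 / b) \<le> v^2 / 2"
    using assms by simp
  moreover have "0 \<le> v^2" by simp
  ultimately have "c * (8 * X * v + 384 * n * v^2 / b) \<le> v^2"
    unfolding distrib_left by linarith
  moreover have pos: "0 < 8 * X * v + 384 * n * v^2 / b"
    using assms by (intro add_pos_nonneg) auto
  ultimately have "c \<le> v^2 / (8 * X * v + 384 * n * v^2 / b)"
    by (subst pos_le_divide_eq) auto
  also have "\<dots> \<le> v^2 / (8 * X * (v + 4 / b * v^2 / m))"
  proof (rule divide_left_mono[OF den])
    show "0 < (8 * X * v + 384 * n * v^2 / b) * (8 * X * (v + 4 / b * v^2 / m))"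
      using assms pos \<open>0 < m\<close> by (intro mult_pos_pos add_pos_nonneg) auto
  qed simp
  finally show ?thesis by (simp add: c_def)
qed

lemma finite_subset_sums: "finite (subset_sums a n)"
proof -
  have "subset_sums a n = sum a ` Pow {1..n}"
    by (auto simp: subset_sums_def)
  then show ?thesis by simp
qed

lemma subset_sums_le_sum:
  assumes "v \<in> subset_sums a n"
  shows "v \<le> (\<Sum>i=1..n. a i)"
proof -
  obtain S where "S \<subseteq> {1..n}" "v = sum a S"
    using assms by (auto simp: subset_sums_def)
  then show ?thesis by (simp add: sum_mono2)
qed

lemma prob_residue_event_ge:
  fixes b M :: real and E :: "(nat \<times> nat) set"
  assumes b: "0 < b" "b \<le> 1" and n: "1 \<le> n"
    and primes: "2 powr (b*n) / (12 * real n) \<le> card (primes_in b n)"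
    and V: "V \<subseteq> subset_sums a n" "V \<noteq> {}" "(\<Sum>i=1..n. a i) < 2^(4*n)"
    and mass: "0 \<le> M"
      "\<And>p. p \<in> primes_in b n \<Longrightarrow> M \<le> (\<Sum>k\<in>{k\<in>{0..<p}. (p, k) \<in> E}. real (residue_count V p k))"
  shows "(M / card V)^2 * (b / 768 * min (1 / n) (card V / 2 powr (b*n)))
           \<le> measure_pmf.prob (pk_pmf b n) E"
proof -
  define P where "P = primes_in b n"
  define X where "X = 2 powr (b*n)"
  define v where "v = real (card V)"
  have "finite V" using V(1) finite_subset_sums by (rule finite_subset)
  then have "0 < v" using V(2) by (simp add: v_def card_gt_0_iff)
  have "0 < X" by (simp add: X_def)
  then have "0 < X / (12 * real n)" using n by simp
  then have "0 < card P" using primes by (simp add: P_def X_def)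
  then have "finite P" "P \<noteq> {}" by (auto simp: card_gt_0_iff)
  have P_bound: "0 < p \<and> p \<le> 2 * X" if "p \<in> P" for p
    using that by (auto simp: P_def primes_in_def X_def powr_add prime_gt_0_nat)
  have "x < 2^(4*n)" if "x \<in> V" for x
    using subset_sums_le_sum[of x a n] that V(1,3) by auto
  then have coll: "card {p \<in> P. x mod p = y mod p} \<le> 4 / b"
    if "x \<in> V" "y \<in> V" "x \<noteq> y" for x y
    using that card_primes_in_cong_le[OF b(1) n] by (simp add: P_def)
  have prob: "measure_pmf.prob (pk_pmf b n) E = (\<Sum>p\<in>P. card {k\<in>{0..<p}. (p, k) \<in> E} / p) / card P"
    unfolding pk_pmf_def P_def[symmetric]
    by (rule prob_uniform_residue) (use \<open>finite P\<close> \<open>P \<noteq> {}\<close> P_bound in auto)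
  have "b / 768 * min (1 / n) (v / X) \<le> v^2 / (8 * X * (v + 4 / b * v^2 / card P))"
    using \<open>0 < X\<close> \<open>0 < v\<close> primes n b
    by (intro second_moment_bound_arith) (auto simp: P_def X_def)
  then have "(M / v)^2 * (b / 768 * min (1 / n) (v / X))
      \<le> (M / v)^2 * (v^2 / (8 * X * (v + 4 / b * v^2 / card P)))"
    by (rule mult_left_mono) simp
  also have "\<dots> = M^2 / (8 * X * (v + 4 / b * v^2 / card P))"
    using \<open>0 < v\<close> by (simp add: power_divide)
  also have "\<dots> \<le> (\<Sum>p\<in>P. card {k\<in>{0..<p}. (p, k) \<in> E} / p) / card P"
    unfolding v_def
    by (rule second_moment_bound[OF \<open>finite P\<close> \<open>P \<noteq> {}\<close> P_bound \<open>finite V\<close> V(2) _ coll])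
       (use b mass in \<open>auto simp: P_def\<close>)
  finally show ?thesis using prob by (simp add: v_def X_def)
qed

lemma prob_large_residue_class:
  fixes b l :: real
  assumes "0 < b" "b \<le> 1" "1 \<le> n" "2 powr (b*n) / (12 * real n) \<le> card (primes_in b n)"
    and "V \<subseteq> subset_sums a n" "(\<Sum>i=1..n. a i) < 2^(4*n)"
    and "l \<le> 1 - b" "2 powr ((1 - l) * n) \<le> card V"
  shows "b / 3072 / n
    \<le> measure_pmf.prob (pk_pmf b n) {(p, k). 2 powr ((1 - l - b) * n - 2) \<le> residue_count V p k}"
proof -
  define X where "X = 2 powr (b*n)"
  define T where "T = 2 powr ((1 - l - b) * n - 2)"
  have "finite V" using assms(5) finite_subset_sums by (rule finite_subset)
  have "X \<le> 2 powr ((1 - l) * n)"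
    unfolding X_def using assms(7) by (intro powr_mono mult_right_mono) auto
  then have "X \<le> card V" using assms(8) by linarith
  have "V \<noteq> {}" using \<open>X \<le> card V\<close> by (auto simp: X_def)
  have "X * T = 2 powr (b * n + ((1 - l - b) * n - 2))"
    by (simp add: X_def T_def powr_add)
  also have "b * n + ((1 - l - b) * n - 2) = (1 - l) * n - 2"
    by (simp add: algebra_simps)
  finally have "4 * X * T = 2 powr ((1 - l) * n)"
    by (simp add: powr_diff)
  have "card V / 2 \<le> (\<Sum>k\<in>{k\<in>{0..<p}. T \<le> residue_count V p k}. real (residue_count V p k))"
    if "p \<in> primes_in b n" for p
  proof -
    have "p \<le> 2 * X" using that by (simp add: primes_in_def X_def powr_add)
    then have "p * T \<le> 2 * X * T" by (intro mult_right_mono) (auto simp: T_def)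
    moreover have "0 < p" using that by (simp add: primes_in_def prime_gt_0_nat)
    moreover have "0 \<le> T" by (simp add: T_def)
    ultimately show ?thesis
      using sum_heavy_residue_count_ge[OF \<open>finite V\<close>, of p T] assms(8) \<open>4 * X * T = _\<close>
      by linarith
  qed
  then have "(1/2)^2 * (b / 768 * min (1 / n) (card V / X))
      \<le> measure_pmf.prob (pk_pmf b n) {(p, k). T \<le> residue_count V p k}"
    using prob_residue_event_ge[OF assms(1-5) \<open>V \<noteq> {}\<close> assms(6), of "card V / 2"] \<open>V \<noteq> {}\<close> \<open>finite V\<close>
    by (simp add: X_def power_divide)
  moreover have "1 / n \<le> card V / X"
  proof -
    have "1 / n \<le> (1::real)" using assms(3) by simp
    also have "\<dots> \<le> card V / X" using \<open>X \<le> card V\<close> by (simp add: X_def)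
    finally show ?thesis .
  qed
  then have "min (1 / n) (card V / X) = 1 / n" by simp
  ultimately show ?thesis by (simp add: T_def power_divide)
qed

lemma prob_hit_residue_class:
  fixes b l :: real
  assumes "0 < b" "b \<le> 1" "1 \<le> n" "2 powr (b*n) / (12 * real n) \<le> card (primes_in b n)"
    and "V \<subseteq> subset_sums a n" "(\<Sum>i=1..n. a i) < 2^(4*n)"
    and "2 powr ((1 - l) * n) \<le> card V"
  shows "b / 3072 * min (1 / n) (2 powr ((1 - l - b) * n))
    \<le> measure_pmf.prob (pk_pmf b n) {(p, k). 1 \<le> residue_count V p k}"
proof -
  have "finite V" using assms(5) finite_subset_sums by (rule finite_subset)
  have "V \<noteq> {}" using assms(7) by (auto simp: powr_def)
  have "(1 - l - b) * n = (1 - l) * n - b * n" by (simp add: algebra_simps)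
  then have "2 powr ((1 - l - b) * n) = 2 powr ((1 - l) * n) / 2 powr (b*n)"
    by (simp only: powr_diff)
  also have "\<dots> \<le> card V / 2 powr (b*n)"
    using assms(7) by (rule divide_right_mono) simp
  finally have "2 powr ((1 - l - b) * n) \<le> card V / 2 powr (b*n)" .
  then have "b / 3072 * min (1 / n) (2 powr ((1 - l - b) * n)) \<le> b / 768 * min (1 / n) (card V / 2 powr (b*n))"
    using assms(1) by (intro mult_mono) auto
  also have "\<dots> \<le> measure_pmf.prob (pk_pmf b n) {(p, k). 1 \<le> residue_count V p k}"
    using prob_residue_event_ge[OF assms(1-5) \<open>V \<noteq> {}\<close> assms(6), of "card V"] \<open>V \<noteq> {}\<close> \<open>finite V\<close>
      sum_nonzero_residue_count[OF \<open>finite V\<close>]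
    by (force simp: primes_in_def prime_gt_0_nat)
  finally show ?thesis .
qed

theorem lemma3p9:
  fixes b :: real
  assumes "0 < b" and "b < 1"
  shows "\<exists>c > 0. \<exists>N. \<forall>n \<ge> N. \<forall>(a :: nat \<Rightarrow> nat) (l :: real) (V :: nat set).
      (\<forall>i\<in>{1..n}. 0 < a i) \<longrightarrow> (\<Sum>i=1..n. a i) < 2 ^ (4 * n) \<longrightarrow>
      0 \<le> l \<longrightarrow> l \<le> 1 \<longrightarrow>
      V \<subseteq> subset_sums a n \<longrightarrow> real (card V) \<ge> 2 powr ((1 - l) * real n) \<longrightarrow>
      (l \<le> 1 - b \<longrightarrow>
         measure_pmf.prob (pk_pmf b n)
           {(p, k). real (residue_count V p k) \<ge> 2 powr ((1 - l - b) * real n - 2)}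
         \<ge> c / real n) \<and>
      (l > 1 - b \<longrightarrow>
         measure_pmf.prob (pk_pmf b n) {(p, k). residue_count V p k \<ge> 1}
         \<ge> c * min (1 / real n) (2 powr ((1 - l - b) * real n)))"
proof -
  have "b \<le> 1" using assms(2) by simp
  obtain N where N: "\<And>n. N \<le> n \<Longrightarrow> 1 \<le> n \<and> 2 powr (b*n) / (12 * real n) \<le> card (primes_in b n)"
    using eventually_conj[OF eventually_ge_at_top[of 1] card_primes_in_lower[OF assms(1) \<open>b \<le> 1\<close>]]
    unfolding eventually_sequentially by blast
  show ?thesis
  proof (intro exI[of _ "b / 3072"] conjI exI[of _ N] allI impI)
    show "0 < b / 3072" using assms(1) by simp
    fix n a l V
    assume n: "N \<le> n" and V: "(\<Sum>i=1..n. a i) < 2 ^ (4 * n)" "V \<subseteq> subset_sums a n"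
      "2 powr ((1 - l) * n) \<le> card V"
    note hyps = assms(1) \<open>b \<le> 1\<close> N[OF n, THEN conjunct1] N[OF n, THEN conjunct2] V(2,1)
    show "b / 3072 / n \<le> measure_pmf.prob (pk_pmf b n)
        {(p, k). 2 powr ((1 - l - b) * n - 2) \<le> residue_count V p k}" if "l \<le> 1 - b"
      using prob_large_residue_class[OF hyps that V(3)] .
    show "b / 3072 * min (1 / n) (2 powr ((1 - l - b) * n))
        \<le> measure_pmf.prob (pk_pmf b n) {(p, k). 1 \<le> residue_count V p k}"
      using prob_hit_residue_class[OF hyps V(3)] .
  qed
qed

end
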